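(* Let $n,j,k,s\geq 1$. If $\mathsf{RT}^n_k\leq_{\mathrm{sW}}\mathsf{RT}^n_j$, then $\mathsf{RT}^n_{k^s}\leq_{\mathrm{sW}}\mathsf{RT}^n_{j^s}$.
   Context: For $n,k\geq1$, $\mathsf{RT}^n_k$ is the problem whose instances are colorings $f:[\omega]^n\to k$ and whose solutions are infinite sets $H$ with $f$ constant on $[H]^n$. $\mathsf{P}\leq_{\mathrm{sW}}\mathsf{Q}$ means there are Turing functionals $\Phi,\Psi$ such that for every instance $A$ of $\mathsf{P}$, $\Phi(A)$ is an instance of $\mathsf{Q}$, and for every solution $T$ to $\Phi(A)$, $\Psi(T)$ is a solution to $A$. *)

theory Defs
  imports Main "HOL-Library.Nat_Bijection"
begin

datatype rf = Zero | Succ | Proj nat | Orc | Comp rf "rf list" | Prim rf rf | Mn rf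

inductive eval :: "(nat \<Rightarrow> nat) \<Rightarrow> rf \<Rightarrow> nat list \<Rightarrow> nat \<Rightarrow> bool" for A where
  ev_zero: "eval A Zero xs 0"
| ev_succ: "eval A Succ (x # xs) (Suc x)"
| ev_proj: "i < length xs \<Longrightarrow> eval A (Proj i) xs (xs ! i)"
| ev_orc: "eval A Orc (x # xs) (A x)"
| ev_comp: "list_all2 (\<lambda>g v. eval A g xs v) gs vs \<Longrightarrow> eval A f vs y \<Longrightarrow> eval A (Comp f gs) xs y"
| ev_prim0: "eval A f xs y \<Longrightarrow> eval A (Prim f g) (0 # xs) y"
| ev_primS: "eval A (Prim f g) (m # xs) z \<Longrightarrow> eval A g (z # m # xs) y
             \<Longrightarrow> eval A (Prim f g) (Suc m # xs) y"
| ev_mn: "eval A f (y # xs) 0 \<Longrightarrow> (\<forall>z<y. \<exists>v. v > 0 \<and> eval A f (z # xs) v)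
          \<Longrightarrow> eval A (Mn f) xs y"

definition computes :: "rf \<Rightarrow> (nat \<Rightarrow> nat) \<Rightarrow> (nat \<Rightarrow> nat) \<Rightarrow> bool" where
  "computes e A B \<longleftrightarrow> (\<forall>x. eval A e [x] (B x))"

type_synonym problem = "((nat \<Rightarrow> nat) \<Rightarrow> bool) \<times> ((nat \<Rightarrow> nat) \<Rightarrow> (nat \<Rightarrow> nat) \<Rightarrow> bool)"

definition sW_le :: "problem \<Rightarrow> problem \<Rightarrow> bool" where
  "sW_le P Q \<longleftrightarrow> (\<exists>\<Phi> \<Psi>. \<forall>A. fst P A \<longrightarrow>
      (\<exists>B. computes \<Phi> A B \<and> fst Q B \<and>
         (\<forall>T. snd Q B T \<longrightarrow> (\<exists>C. computes \<Psi> T C \<and> snd P A C))))"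

text \<open>A colouring f : [omega]^n -> k is coded by c :: nat => nat with
  f(F) = c (set_encode F) for every F with card F = n, c(set_encode F) < k,
  and c m = 0 when m does not code an n-element set (canonical coding).\<close>
definition RT_inst :: "nat \<Rightarrow> nat \<Rightarrow> (nat \<Rightarrow> nat) \<Rightarrow> bool" where
  "RT_inst n k c \<longleftrightarrow>
     (\<forall>F. finite F \<and> card F = n \<longrightarrow> c (set_encode F) < k) \<and>
     (\<forall>m. card (set_decode m) \<noteq> n \<longrightarrow> c m = 0)"

definition char_set :: "(nat \<Rightarrow> nat) \<Rightarrow> nat set" where
  "char_set h = {x. h x = 1}"

definition RT_sol :: "nat \<Rightarrow> (nat \<Rightarrow> nat) \<Rightarrow> (nat \<Rightarrow> nat) \<Rightarrow> bool" where
  "RT_sol n c h \<longleftrightarrow> (\<forall>x. h x \<le> 1) \<and> infinite (char_set h) \<and>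
     (\<exists>i. \<forall>F. F \<subseteq> char_set h \<and> finite F \<and> card F = n \<longrightarrow> c (set_encode F) = i)"

definition RT :: "nat \<Rightarrow> nat \<Rightarrow> problem" where
  "RT n k = (RT_inst n k, RT_sol n)"

end

theory Submission imports Defs begin

text \<open>
  A colouring A with k^s colours is split into its s base-k digits
  digit k l \<circ> A (l < s), each of which is a k-colouring.  Applying the given forward
  functional \<Phi> to every digit yields j-colourings B l, which we reassemble into
  the j^s-colouring whose value at x has base-j digits B 0 x, ..., B (s - 1) x.  The assembly is uniformly
  computable from A: the oracle of \<Phi> is replaced by a program computing a digit of A
  (possible by a finite table, as A is bounded by k^s).  Conversely, a set homogeneous
  for B is homogeneous for every B l (the base-j representation is injective), so the
  backward functional \<Psi> maps it to a set that is homogeneous for every digit of A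
  (by determinism it is the same set for all l), hence homogeneous for A itself.  Thus \<Psi> serves unchanged as the backward functional.
\<close>

lemma eval_proj: "i < length xs \<Longrightarrow> xs ! i = y \<Longrightarrow> eval A (Proj i) xs y"
  using ev_proj by blast

lemma eval_comp1: "eval A g xs v \<Longrightarrow> eval A f [v] y \<Longrightarrow> eval A (Comp f [g]) xs y"
  by (rule ev_comp[where vs="[v]"]) auto

lemma eval_comp2:
  "eval A g1 xs v1 \<Longrightarrow> eval A g2 xs v2 \<Longrightarrow> eval A f [v1, v2] y \<Longrightarrow> eval A (Comp f [g1, g2]) xs y"
  by (rule ev_comp[where vs="[v1, v2]"]) auto

lemma eval_output: "eval A f xs y \<Longrightarrow> y = y' \<Longrightarrow> eval A f xs y'"
  by simp

fun const_rf :: "nat \<Rightarrow> rf" where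
  "const_rf 0 = Zero"
| "const_rf (Suc c) = Comp Succ [const_rf c]"

lemma eval_const: "eval A (const_rf c) xs c"
  by (induction c) (auto intro: eval_comp1 ev_zero ev_succ)

definition add_rf :: rf where
  "add_rf = Prim (Proj 0) (Comp Succ [Proj 0])"

lemma eval_add: "eval A add_rf (m # x # xs) (m + x)"
proof (induction m)
  case 0
  show ?case unfolding add_rf_def by (rule ev_prim0, rule eval_proj) auto
next
  case (Suc m)
  show ?case unfolding add_rf_def
    by (rule ev_primS[OF Suc[unfolded add_rf_def]], rule eval_comp1, rule eval_proj,
        auto intro: ev_succ)
qed

definition mult_rf :: rf where
  "mult_rf = Prim Zero (Comp add_rf [Proj 0, Proj 2])"

lemma eval_mult: "eval A mult_rf (m # x # xs) (m * x)"
proof (induction m)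
  case 0
  show ?case unfolding mult_rf_def by (rule eval_output, rule ev_prim0, rule ev_zero) auto
next
  case (Suc m)
  show ?case unfolding mult_rf_def
    by (rule ev_primS[OF Suc[unfolded mult_rf_def]], rule eval_comp2,
        (rule eval_proj, auto)[1], (rule eval_proj, auto)[1], rule eval_output, rule eval_add, simp)
qed

definition pred_rf :: rf where
  "pred_rf = Prim Zero (Proj 1)"

lemma eval_pred: "eval A pred_rf (m # xs) (m - 1)"
proof (induction m)
  case 0
  show ?case unfolding pred_rf_def by (auto intro: ev_prim0 ev_zero)
next
  case (Suc m)
  show ?case unfolding pred_rf_def
    by (rule eval_output[OF ev_primS[OF Suc[unfolded pred_rf_def] eval_proj]]) auto
qed

text \<open>Truncated subtraction, with the subtrahend as first argument.\<close>
definition monus_rf :: rf where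
  "monus_rf = Prim (Proj 0) (Comp pred_rf [Proj 0])"

lemma eval_monus: "eval A monus_rf (m # x # xs) (x - m)"
proof (induction m)
  case 0
  show ?case unfolding monus_rf_def by (rule eval_output, rule ev_prim0, rule eval_proj) auto
next
  case (Suc m)
  show ?case unfolding monus_rf_def
    by (rule ev_primS[OF Suc[unfolded monus_rf_def]], rule eval_comp1, (rule eval_proj, auto)[1],
        rule eval_output, rule eval_pred, simp)
qed

text \<open>The indicator of y = c, computed as 1 - ((c - y) + (y - c)).\<close>
definition is_rf :: "nat \<Rightarrow> rf" where
  "is_rf c = Comp monus_rf [Comp add_rf [Comp monus_rf [Proj 0, const_rf c],
                                         Comp monus_rf [const_rf c, Proj 0]], const_rf 1]"

lemma eval_is: "eval A (is_rf c) (y # xs) (if y = c then 1 else 0)"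
proof -
  have "eval A (Comp monus_rf [Proj 0, const_rf c]) (y # xs) (c - y)"
    by (rule eval_comp2, (rule eval_proj; simp), rule eval_const, rule eval_monus)
  moreover have "eval A (Comp monus_rf [const_rf c, Proj 0]) (y # xs) (y - c)"
    by (rule eval_comp2, rule eval_const, (rule eval_proj; simp), rule eval_monus)
  ultimately have "eval A (Comp add_rf [Comp monus_rf [Proj 0, const_rf c],
                     Comp monus_rf [const_rf c, Proj 0]]) (y # xs) ((c - y) + (y - c))"
    by (rule eval_comp2) (rule eval_add)
  moreover have "1 - ((c - y) + (y - c)) = (if y = c then 1 else 0)" by auto
  ultimately show ?thesis unfolding is_rf_def
    by (intro eval_comp2[OF _ eval_const] eval_output[OF eval_monus])
qed

fun table_rf :: "(nat \<Rightarrow> nat) \<Rightarrow> nat \<Rightarrow> rf" where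
  "table_rf h 0 = Zero"
| "table_rf h (Suc c) = Comp add_rf [table_rf h c, Comp mult_rf [is_rf c, const_rf (h c)]]"

lemma eval_table: "eval A (table_rf h N) (y # xs) (if y < N then h y else 0)"
proof (induction N)
  case 0
  show ?case by (auto intro: ev_zero)
next
  case (Suc N)
  show ?case
    by (simp only: table_rf.simps, rule eval_comp2[OF Suc],
        rule eval_comp2[OF eval_is eval_const], rule eval_mult, rule eval_output, rule eval_add) (auto simp: less_Suc_eq)
qed

definition orc_table_rf :: "(nat \<Rightarrow> nat) \<Rightarrow> nat \<Rightarrow> rf" where
  "orc_table_rf h N = Comp (table_rf h N) [Orc]"

lemma eval_orc_table: "A x < N \<Longrightarrow> eval A (orc_table_rf h N) (x # xs) (h (A x))"
  unfolding orc_table_rf_def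
  by (rule eval_comp1, rule ev_orc, rule eval_output, rule eval_table) simp

section \<open>Oracle substitution and determinism\<close>

primrec subst_orc :: "rf \<Rightarrow> rf \<Rightarrow> rf" where
  "subst_orc G Zero = Zero"
| "subst_orc G Succ = Succ"
| "subst_orc G (Proj i) = Proj i"
| "subst_orc G Orc = G"
| "subst_orc G (Comp f gs) = Comp (subst_orc G f) (map (subst_orc G) gs)"
| "subst_orc G (Prim f g) = Prim (subst_orc G f) (subst_orc G g)"
| "subst_orc G (Mn f) = Mn (subst_orc G f)"

lemma eval_subst_orc:
  assumes G: "\<And>x xs. eval A G (x # xs) (B x)"
  shows "eval B e xs y \<Longrightarrow> eval A (subst_orc G e) xs y"
proof (induction rule: eval.induct)
  case (ev_comp xs gs vs f y)
  have "list_all2 (\<lambda>g v. eval A g xs v) (map (subst_orc G) gs) vs"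
    using ev_comp(1) unfolding list_all2_map1 by (rule list_all2_mono) simp
  then show ?case by (simp, rule eval.ev_comp) (rule ev_comp.IH(2))
next
  case (ev_mn f y xs)
  then show ?case by (simp, intro eval.ev_mn) blast+
qed (simp_all add: G eval.ev_zero eval.ev_succ eval.ev_proj eval.ev_prim0 eval.ev_primS)

lemma list_all2_unique:
  "list_all2 (\<lambda>g v. P g v \<and> (\<forall>v'. Q g v' \<longrightarrow> v = v')) gs vs \<Longrightarrow> list_all2 Q gs ws \<Longrightarrow> vs = ws"
proof (induction arbitrary: ws rule: list_all2_induct)
  case (Cons x xs y ys)
  then show ?case by (cases ws) auto
qed simp

inductive_cases eval_CompE: "eval A (Comp f gs) xs y"
inductive_cases eval_MnE: "eval A (Mn f) xs y"

text \<open>A program computes at most one output; for \<mu>-recursion this is the leastness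
  of the root.\<close>
lemma eval_det: "eval A e xs y \<Longrightarrow> eval A e xs y' \<Longrightarrow> y = y'"
proof (induction arbitrary: y' rule: eval.induct)
  case (ev_comp xs gs vs f y)
  from ev_comp.prems obtain ws where ws: "list_all2 (\<lambda>g v. eval A g xs v) gs ws" "eval A f ws y'"
    by (cases rule: eval_CompE) blast
  have "vs = ws" by (rule list_all2_unique[OF ev_comp.IH(1) ws(1)])
  then show ?case using ev_comp.IH(2) ws(2) by simp
next
  case (ev_prim0 f xs y)
  from ev_prim0.prems have "eval A f xs y'" by (cases rule: eval.cases) auto
  then show ?case by (rule ev_prim0.IH)
next
  case (ev_primS f g m xs z y)
  from ev_primS.prems obtain z' where z': "eval A (Prim f g) (m # xs) z'" "eval A g (z' # m # xs) y'"
    by (cases rule: eval.cases) auto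
  have "z = z'" by (rule ev_primS.IH(1)[OF z'(1)])
  then show ?case using ev_primS.IH(2) z'(2) by simp
next
  case (ev_mn f y xs)
  from ev_mn.prems have root: "eval A f (y' # xs) 0" and below: "\<forall>z<y'. \<exists>v>0. eval A f (z # xs) v"
    by (auto elim: eval_MnE)
  show ?case
  proof (rule linorder_cases[of y y'])
    assume "y < y'"
    with below obtain v where "v > 0" "eval A f (y # xs) v" by blast
    with ev_mn.IH(1) show ?case by force
  next
    assume "y' < y"
    with ev_mn.IH(2) root show ?case by force
  qed
qed (erule eval.cases; simp)+

lemma computes_det: "computes e A B \<Longrightarrow> computes e A B' \<Longrightarrow> B = B'"
  unfolding computes_def using eval_det by blast

section \<open>Base-b representations\<close>

fun radix :: "nat \<Rightarrow> (nat \<Rightarrow> nat) \<Rightarrow> nat \<Rightarrow> nat" where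
  "radix b d 0 = 0"
| "radix b d (Suc s) = d 0 + b * radix b (\<lambda>l. d (Suc l)) s"

definition digit :: "nat \<Rightarrow> nat \<Rightarrow> nat \<Rightarrow> nat" where
  "digit b l y = y div b ^ l mod b"

lemma radix_cong: "(\<And>l. l < s \<Longrightarrow> d l = d' l) \<Longrightarrow> radix b d s = radix b d' s"
proof (induction s arbitrary: d d')
  case (Suc s)
  have "radix b (\<lambda>l. d (Suc l)) s = radix b (\<lambda>l. d' (Suc l)) s"
    by (rule Suc.IH) (simp add: Suc.prems)
  then show ?case using Suc.prems[of 0] by simp
qed simp

lemma radix_zero: "radix b (\<lambda>l. 0) s = 0"
  by (induction s) simp_all

lemma radix_less: "(\<And>l. l < s \<Longrightarrow> d l < b) \<Longrightarrow> radix b d s < b ^ s"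
proof (induction s arbitrary: d)
  case (Suc s)
  have "radix b (\<lambda>l. d (Suc l)) s < b ^ s" by (rule Suc.IH) (use Suc.prems in auto)
  then have rest: "radix b (\<lambda>l. d (Suc l)) s + 1 \<le> b ^ s" by simp
  moreover have "d 0 < b" using Suc.prems by auto
  ultimately have "d 0 + b * radix b (\<lambda>l. d (Suc l)) s < b * (radix b (\<lambda>l. d (Suc l)) s + 1)"
    by simp
  also have "\<dots> \<le> b * b ^ s" using rest by (rule mult_le_mono2)
  finally show ?case by simp
qed simp

lemma radix_inj:
  assumes "\<And>l. l < s \<Longrightarrow> d l < b \<and> d' l < b" and "radix b d s = radix b d' s" and "l < s"
  shows "d l = d' l"
  using assms
proof (induction s arbitrary: d d' l)
  case (Suc s)
  have lt: "d 0 < b" "d' 0 < b" using Suc.prems(1) by auto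
  have eq: "d 0 + b * radix b (\<lambda>l. d (Suc l)) s = d' 0 + b * radix b (\<lambda>l. d' (Suc l)) s"
    using Suc.prems(2) by simp
  then have "(d 0 + b * radix b (\<lambda>l. d (Suc l)) s) mod b = (d' 0 + b * radix b (\<lambda>l. d' (Suc l)) s) mod b"
    by simp
  then have d0: "d 0 = d' 0" using lt by simp
  have "b > 0" using lt by simp
  with eq d0 have tail: "radix b (\<lambda>l. d (Suc l)) s = radix b (\<lambda>l. d' (Suc l)) s" by simp
  have "d (Suc i) = d' (Suc i)" if "i < s" for i
    by (rule Suc.IH[of "\<lambda>l. d (Suc l)" "\<lambda>l. d' (Suc l)"], use Suc.prems(1) in simp, rule tail, rule that)
  with d0 Suc.prems(3) show ?case by (cases l) auto
qed simp

lemma radix_digit: "radix b (\<lambda>l. digit b l y) s = y mod b ^ s"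
proof (induction s arbitrary: y)
  case (Suc s)
  have shift: "(\<lambda>l. digit b (Suc l) y) = (\<lambda>l. digit b l (y div b))"
    by (simp add: digit_def div_mult2_eq)
  have "radix b (\<lambda>l. digit b l y) (Suc s) = digit b 0 y + b * radix b (\<lambda>l. digit b l (y div b)) s"
    by (simp only: radix.simps shift)
  also have "\<dots> = y mod b + b * (y div b mod b ^ s)"
    by (simp only: Suc.IH) (simp add: digit_def)
  also have "\<dots> = y mod b ^ Suc s" by (simp add: mod_mult2_eq)
  finally show ?case .
qed simp

section \<open>The digitwise functional\<close>

text \<open>digitwise \<Phi> b N c l s runs \<Phi> on the oracles digit b (l + i) \<circ> A for i < s (for
  oracles A bounded by N, so that a digit of A is a finite table lookup) and combines
  the s results as base-c digits.\<close>
fun digitwise :: "rf \<Rightarrow> nat \<Rightarrow> nat \<Rightarrow> nat \<Rightarrow> nat \<Rightarrow> nat \<Rightarrow> rf" where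
  "digitwise \<Phi> b N c l 0 = Zero"
| "digitwise \<Phi> b N c l (Suc s) = Comp add_rf [subst_orc (orc_table_rf (digit b l) N) \<Phi>,
      Comp mult_rf [const_rf c, digitwise \<Phi> b N c (Suc l) s]]"

lemma eval_digitwise:
  assumes bounded: "\<And>x. A x < N"
    and run: "\<And>l x. eval (\<lambda>x. digit b l (A x)) \<Phi> [x] (B l x)"
  shows "eval A (digitwise \<Phi> b N c l s) [x] (radix c (\<lambda>i. B (l + i) x) s)"
proof (induction s arbitrary: l)
  case 0
  show ?case by (simp add: ev_zero)
next
  case (Suc s)
  have digit_prog: "eval A (orc_table_rf (digit b l) N) (x # xs) (digit b l (A x))" for x xs
    using bounded by (rule eval_orc_table)
  show ?case
    by (simp only: digitwise.simps radix.simps,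
        rule eval_comp2[OF eval_subst_orc[OF digit_prog run]],
        rule eval_comp2[OF eval_const Suc.IH], rule eval_mult, rule eval_output, rule eval_add)
       (simp add: add_Suc_right)
qed

lemma RT_inst_colour: "RT_inst n K c \<Longrightarrow> finite F \<Longrightarrow> card F = n \<Longrightarrow> c (set_encode F) < K"
  unfolding RT_inst_def by blast

lemma RT_inst_zero: "RT_inst n K c \<Longrightarrow> card (set_decode x) \<noteq> n \<Longrightarrow> c x = 0"
  unfolding RT_inst_def by blast

lemma RT_inst_less: "RT_inst n K c \<Longrightarrow> K \<ge> 1 \<Longrightarrow> c x < K"
  using RT_inst_colour[of n K c "set_decode x"] RT_inst_zero[of n K c x]
  by (cases "card (set_decode x) = n") (auto simp: set_decode_inverse)

lemma RT_inst_digit: "RT_inst n K c \<Longrightarrow> b \<ge> 1 \<Longrightarrow> RT_inst n b (\<lambda>x. digit b l (c x))"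
  unfolding RT_inst_def digit_def by auto

lemma RT_inst_radix:
  assumes "\<And>l. l < s \<Longrightarrow> RT_inst n b (B l)"
  shows "RT_inst n (b ^ s) (\<lambda>x. radix b (\<lambda>l. B l x) s)"
  unfolding RT_inst_def
proof (intro conjI allI impI)
  fix F :: "nat set" assume "finite F \<and> card F = n"
  then show "radix b (\<lambda>l. B l (set_encode F)) s < b ^ s"
    using assms RT_inst_colour by (intro radix_less) blast
next
  fix x assume "card (set_decode x) \<noteq> n"
  then have "radix b (\<lambda>l. B l x) s = radix b (\<lambda>l. 0) s"
    using assms RT_inst_zero by (intro radix_cong) blast
  then show "radix b (\<lambda>l. B l x) s = 0" by (simp add: radix_zero)
qed

definition same_colour :: "nat \<Rightarrow> (nat \<Rightarrow> nat) \<Rightarrow> nat set \<Rightarrow> bool" where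
  "same_colour n c H \<longleftrightarrow> (\<forall>F F'. F \<subseteq> H \<and> finite F \<and> card F = n \<longrightarrow>
      F' \<subseteq> H \<and> finite F' \<and> card F' = n \<longrightarrow> c (set_encode F) = c (set_encode F'))"

lemma RT_sol_iff:
  "RT_sol n c h \<longleftrightarrow> (\<forall>x. h x \<le> 1) \<and> infinite (char_set h) \<and> same_colour n c (char_set h)"
proof -
  have "(\<exists>i. \<forall>F. F \<subseteq> H \<and> finite F \<and> card F = n \<longrightarrow> c (set_encode F) = i) \<longleftrightarrow> same_colour n c H"
    for H
    unfolding same_colour_def by (cases "\<exists>F. F \<subseteq> H \<and> finite F \<and> card F = n") metis+
  then show ?thesis unfolding RT_sol_def by blast
qed

lemma RT_sol_radix_digit:
  assumes inst: "\<And>l. l < s \<Longrightarrow> RT_inst n b (B l)"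
    and T: "RT_sol n (\<lambda>x. radix b (\<lambda>l. B l x) s) T" and "l < s"
  shows "RT_sol n (B l) T"
proof -
  have "B l (set_encode F) = B l (set_encode F')"
    if F: "F \<subseteq> char_set T \<and> finite F \<and> card F = n"
      and F': "F' \<subseteq> char_set T \<and> finite F' \<and> card F' = n" for F F'
  proof (rule radix_inj[OF _ _ \<open>l < s\<close>])
    show "B i (set_encode F) < b \<and> B i (set_encode F') < b" if "i < s" for i
      using RT_inst_colour[OF inst[OF that]] F F' by blast
    show "radix b (\<lambda>i. B i (set_encode F)) s = radix b (\<lambda>i. B i (set_encode F')) s"
      using T F F' unfolding RT_sol_iff same_colour_def by blast
  qed
  then show ?thesis using T unfolding RT_sol_iff same_colour_def by blast
qed

lemma same_colour_digits:
  assumes bounded: "\<And>x. c x < b ^ s"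
    and digits: "\<And>l. l < s \<Longrightarrow> same_colour n (\<lambda>x. digit b l (c x)) H"
  shows "same_colour n c H"
  unfolding same_colour_def
proof (intro allI impI)
  fix F F' assume F: "F \<subseteq> H \<and> finite F \<and> card F = n" and F': "F' \<subseteq> H \<and> finite F' \<and> card F' = n"
  have "c (set_encode F) = radix b (\<lambda>l. digit b l (c (set_encode F))) s"
    using bounded by (simp add: radix_digit)
  also have "\<dots> = radix b (\<lambda>l. digit b l (c (set_encode F'))) s"
    using digits F F' unfolding same_colour_def by (intro radix_cong) blast
  also have "\<dots> = c (set_encode F')"
    using bounded by (simp add: radix_digit)
  finally show "c (set_encode F) = c (set_encode F')" .
qed

text \<open>Determinism makes the s outputs of \<Psi> coincide.\<close>
lemma RT_sol_pullback:
  assumes "s \<ge> 1" and bounded: "\<And>x. A x < b ^ s"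
    and inst: "\<And>l. l < s \<Longrightarrow> RT_inst n c (B l)"
    and backward: "\<And>l T. l < s \<Longrightarrow> RT_sol n (B l) T \<Longrightarrow>
                 \<exists>C. computes \<Psi> T C \<and> RT_sol n (\<lambda>x. digit b l (A x)) C"
    and T: "RT_sol n (\<lambda>x. radix c (\<lambda>l. B l x) s) T"
  shows "\<exists>C. computes \<Psi> T C \<and> RT_sol n A C"
proof -
  have "\<forall>l. \<exists>C. l < s \<longrightarrow> computes \<Psi> T C \<and> RT_sol n (\<lambda>x. digit b l (A x)) C"
    using backward RT_sol_radix_digit[OF inst T] by blast
  then obtain C where C: "\<And>l. l < s \<Longrightarrow> computes \<Psi> T (C l) \<and> RT_sol n (\<lambda>x. digit b l (A x)) (C l)"
    by metis
  have "0 < s" using \<open>s \<ge> 1\<close> by simp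
  have same: "C l = C 0" if "l < s" for l
    using computes_det C[OF that] C[OF \<open>0 < s\<close>] by blast
  have "same_colour n A (char_set (C 0))"
    using C same by (intro same_colour_digits[OF bounded]) (metis RT_sol_iff)
  then have "RT_sol n A (C 0)"
    using C[OF \<open>0 < s\<close>] unfolding RT_sol_iff by blast
  then show ?thesis using C[OF \<open>0 < s\<close>] by blast
qed

theorem lemma3p5:
  fixes n j k s :: nat
  assumes "n \<ge> 1" and "j \<ge> 1" and "k \<ge> 1" and "s \<ge> 1"
    and "sW_le (RT n k) (RT n j)"
  shows "sW_le (RT n (k ^ s)) (RT n (j ^ s))"
proof -
  obtain \<Phi> \<Psi> where red: "\<And>A. RT_inst n k A \<Longrightarrow> \<exists>B. computes \<Phi> A B \<and> RT_inst n j B \<and>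
        (\<forall>T. RT_sol n B T \<longrightarrow> (\<exists>C. computes \<Psi> T C \<and> RT_sol n A C))"
    using assms(5) unfolding sW_le_def RT_def by auto
  have "\<exists>B. computes (digitwise \<Phi> k (k ^ s) j 0 s) A B \<and> RT_inst n (j ^ s) B \<and>
          (\<forall>T. RT_sol n B T \<longrightarrow> (\<exists>C. computes \<Psi> T C \<and> RT_sol n A C))"
    if A: "RT_inst n (k ^ s) A" for A
  proof -
    have bounded: "A x < k ^ s" for x
      using RT_inst_less[OF A] assms(3) by simp
    obtain B where B: "\<And>l. computes \<Phi> (\<lambda>x. digit k l (A x)) (B l) \<and> RT_inst n j (B l) \<and>
        (\<forall>T. RT_sol n (B l) T \<longrightarrow> (\<exists>C. computes \<Psi> T C \<and> RT_sol n (\<lambda>x. digit k l (A x)) C))"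
      using red[OF RT_inst_digit[OF A assms(3)]] by metis
    have "computes (digitwise \<Phi> k (k ^ s) j 0 s) A (\<lambda>x. radix j (\<lambda>l. B l x) s)"
      using eval_digitwise[where \<Phi>=\<Phi> and B=B and l=0, OF bounded] B unfolding computes_def by simp
    moreover have "RT_inst n (j ^ s) (\<lambda>x. radix j (\<lambda>l. B l x) s)"
      using B by (intro RT_inst_radix) blast
    moreover have "\<exists>C. computes \<Psi> T C \<and> RT_sol n A C"
      if "RT_sol n (\<lambda>x. radix j (\<lambda>l. B l x) s) T" for T
      by (rule RT_sol_pullback[where A=A and b=k and B=B and c=j]) (use assms(4) bounded B that in blast)+
    ultimately show ?thesis by blast
  qed
  then show ?thesis unfolding sW_le_def RT_def by auto
qed

end
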